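(* Let $H \in \mathbb{Z}^{k \times n}$, $b^\star \in \mathbb{R}^k$ and $b \in \mathbb{Z}^k$, and suppose there exists $x^\star \in [0,1]^n$ with $Hx^\star = b^\star$ such that $x^\star$ has at most $\varphi$ fractional entries (entries not in $\{0,1\}$), where $\varphi$ is a nonnegative integer. If the system $Hz = b$, $z \in \{0,1\}^n$ has a solution, then there exists a solution $\hat{z} \in \{0,1\}^n$ of $H\hat z = b$ with \[ \|x^\star - \hat{z}\|_1 \leq \left( \left\lceil \frac{\|b^\star - b\|_\infty}{\|H\|_\infty} \right\rceil + \varphi + 1 \right) (2k \|H\|_\infty + 1)^k. \]
   Context: For a matrix $H$, $\|H\|_\infty$ denotes the maximum absolute value of an entry of $H$; for vectors, $\|\cdot\|_1$ and $\|\cdot\|_\infty$ are the usual $\ell_1$- and $\ell_\infty$-norms. *)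

theory Defs
  imports Complex_Main
begin

text \<open>Matrices are k x n, represented as functions on indices i < k, j < n.
Vectors of length m are functions on indices < m.\<close>

definition mat_max_norm :: "nat \<Rightarrow> nat \<Rightarrow> (nat \<Rightarrow> nat \<Rightarrow> int) \<Rightarrow> int" where
  "mat_max_norm k n H = Max (insert 0 {\<bar>H i j\<bar> | i j. i < k \<and> j < n})"

definition vec_inf_norm :: "nat \<Rightarrow> (nat \<Rightarrow> real) \<Rightarrow> real" where
  "vec_inf_norm m v = Max (insert 0 {\<bar>v i\<bar> | i. i < m})"

definition vec_one_norm :: "nat \<Rightarrow> (nat \<Rightarrow> real) \<Rightarrow> real" where
  "vec_one_norm m v = (\<Sum>i<m. \<bar>v i\<bar>)"

definition mat_vec_real :: "nat \<Rightarrow> (nat \<Rightarrow> nat \<Rightarrow> int) \<Rightarrow> (nat \<Rightarrow> real) \<Rightarrow> nat \<Rightarrow> real" where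
  "mat_vec_real n H x i = (\<Sum>j<n. of_int (H i j) * x j)"

definition mat_vec_int :: "nat \<Rightarrow> (nat \<Rightarrow> nat \<Rightarrow> int) \<Rightarrow> (nat \<Rightarrow> int) \<Rightarrow> nat \<Rightarrow> int" where
  "mat_vec_int n H z i = (\<Sum>j<n. H i j * z j)"

end

theory Submission
  imports Defs
begin

text \<open>
  Let \<open>\<Delta> = \<parallel>H\<parallel>\<^sub>\<infinity>\<close> and \<open>t = \<lceil>\<parallel>b\<^sup>\<star> - b\<parallel>\<^sub>\<infinity> / \<Delta>\<rceil> + \<phi>\<close>. For a binary solution \<open>z\<close> of \<open>Hz = b\<close> let
  \<open>x\<close> agree with \<open>x\<^sup>\<star>\<close> on the integral entries of \<open>x\<^sup>\<star>\<close> and with \<open>z\<close> elsewhere, and choose \<open>z\<close>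
  such that the set \<open>M\<close> of entries where \<open>x\<close> and \<open>z\<close> differ is as small as possible. As
  \<open>H(x - z) = H(x - x\<^sup>\<star>) + (b\<^sup>\<star> - b)\<close> and \<open>x - x\<^sup>\<star>\<close> lives on at most \<open>\<phi>\<close> entries, every entry of
  \<open>H(x - z)\<close> is at most \<open>t\<Delta>\<close> in absolute value, so \<open>-H(x - z)\<close> splits into \<open>t\<close> integer vectors of
  norm at most \<open>\<Delta>\<close>. Together with the columns \<open>(x\<^sub>j - z\<^sub>j) H\<^sub>j\<close>, \<open>j \<in> M\<close>, they sum to zero, so by
  the Steinitz lemma they can be ordered such that every prefix sum has norm at most \<open>k\<Delta>\<close>. If
  \<open>|M| + t + 1 > (t + 1)(2k\<Delta> + 1)\<^sup>k\<close>, two prefixes contain equally many of the added vectors and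
  have equal sums; their difference is a nonempty \<open>T \<subseteq> M\<close> whose columns sum to zero, and replacing
  \<open>z\<close> by \<open>x\<close> on \<open>T\<close> contradicts minimality. Hence \<open>\<parallel>x\<^sup>\<star> - z\<parallel>\<^sub>1 \<le> |M| + \<phi> \<le> (t + 1)(2k\<Delta> + 1)\<^sup>k\<close>.

  The Steinitz lemma is proved through weights \<open>\<lambda> \<in> [0,1]\<^sup>A\<close> with \<open>\<Sum> \<lambda>\<^sub>i v\<^sub>i = 0\<close> and
  \<open>\<Sum> \<lambda>\<^sub>i = |A| - k\<close>: they give \<open>\<parallel>\<Sum> v\<^sub>i\<parallel> = \<parallel>\<Sum> (1 - \<lambda>\<^sub>i) v\<^sub>i\<parallel> \<le> kD\<close>, and a basic solution of the
  same system with total weight \<open>|A| - k - 1\<close> has a zero entry, so one vector can be removed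
  while keeping such weights.
\<close>

section \<open>Basic solutions of box-constrained linear systems\<close>

lemma homogeneous_system_nontrivial_solution:
  fixes a :: "nat \<Rightarrow> 'a \<Rightarrow> 'b::field"
  assumes "finite F" and "m < card F"
  shows "\<exists>\<nu>. (\<exists>i\<in>F. \<nu> i \<noteq> 0) \<and> (\<forall>l<m. (\<Sum>i\<in>F. a l i * \<nu> i) = 0)"
  using assms
proof (induction m arbitrary: F a)
  case 0
  then obtain i where "i \<in> F" by fastforce
  then show ?case by (intro exI[of _ "\<lambda>_. 1"]) auto
next
  case (Suc m)
  show ?case
  proof (cases "\<forall>i\<in>F. a m i = 0")
    case True
    with Suc.IH[of F a] Suc.prems show ?thesis by (auto simp: less_Suc_eq)
  next
    case False
    then obtain p where p: "p \<in> F" "a m p \<noteq> 0" by auto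
    define F' where "F' = F - {p}"
    have F: "F = insert p F'" "p \<notin> F'" "finite F'" "m < card F'"
      using Suc.prems p by (auto simp: F'_def)
    define a' where "a' l i = a l i - a l p * a m i / a m p" for l i
    from Suc.IH[OF F(3,4), of a'] obtain \<nu>' where
      \<nu>': "\<exists>i\<in>F'. \<nu>' i \<noteq> 0" "\<forall>l<m. (\<Sum>i\<in>F'. a' l i * \<nu>' i) = 0" by auto
    define S where "S = (\<Sum>i\<in>F'. a m i * \<nu>' i)"
    define \<nu> where "\<nu> = \<nu>'(p := - S / a m p)"
    have sum_F: "(\<Sum>i\<in>F. a l i * \<nu> i) = a l p * (- S / a m p) + (\<Sum>i\<in>F'. a l i * \<nu>' i)" for l
      using F by (simp add: \<nu>_def, intro sum.cong) auto
    have "(\<Sum>i\<in>F. a l i * \<nu> i) = 0" if "l < Suc m" for l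
    proof (cases "l = m")
      case True
      then show ?thesis using sum_F[of l] p(2) by (simp add: S_def)
    next
      case False
      then have "l < m" using that by simp
      have "(\<Sum>i\<in>F'. a l i * \<nu>' i) = (\<Sum>i\<in>F'. a' l i * \<nu>' i + a l p / a m p * (a m i * \<nu>' i))"
        by (intro sum.cong) (auto simp: a'_def algebra_simps)
      also have "\<dots> = a l p / a m p * S"
        using \<nu>'(2) \<open>l < m\<close> by (simp add: sum.distrib sum_distrib_left S_def)
      finally show ?thesis using sum_F[of l] by simp
    qed
    moreover have "\<exists>i\<in>F. \<nu> i \<noteq> 0" using \<nu>'(1) F by (auto simp: \<nu>_def)
    ultimately show ?thesis by blast
  qed
qed

definition box_polytope :: "'a set \<Rightarrow> (nat \<Rightarrow> 'a \<Rightarrow> real) \<Rightarrow> (nat \<Rightarrow> real) \<Rightarrow> nat \<Rightarrow> ('a \<Rightarrow> real) set" where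
  "box_polytope A a r m =
     {\<mu>. (\<forall>i\<in>A. 0 \<le> \<mu> i \<and> \<mu> i \<le> 1) \<and> (\<forall>l<m. (\<Sum>i\<in>A. a l i * \<mu> i) = r l)}"

definition fractional_entries :: "'a set \<Rightarrow> ('a \<Rightarrow> real) \<Rightarrow> 'a set" where
  "fractional_entries A \<mu> = {i\<in>A. \<mu> i \<notin> {0, 1}}"

lemma ratio_test:
  fixes \<mu> \<nu> :: "'a \<Rightarrow> real"
  assumes "finite R" "R \<noteq> {}" "\<forall>i\<in>R. 0 < \<mu> i \<and> \<mu> i < 1 \<and> \<nu> i \<noteq> 0"
  shows "\<exists>t\<ge>0. (\<forall>i\<in>R. 0 \<le> \<mu> i + t * \<nu> i \<and> \<mu> i + t * \<nu> i \<le> 1) \<and> (\<exists>i\<in>R. \<mu> i + t * \<nu> i \<in> {0, 1})"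
proof -
  define step where "step i = (if \<nu> i > 0 then (1 - \<mu> i) / \<nu> i else \<mu> i / - \<nu> i)" for i
  define t where "t = Min (step ` R)"
  have "t \<in> step ` R" unfolding t_def using assms(1,2) by simp
  then obtain i0 where i0: "i0 \<in> R" "step i0 = t" by auto
  have t_le: "t \<le> step i" if "i \<in> R" for i
    using assms(1) that unfolding t_def by simp
  have step_pos: "0 < step i" if "i \<in> R" for i
    using assms(3) that by (auto simp: step_def divide_pos_neg)
  have "0 \<le> t" using step_pos i0 by force
  moreover have "0 \<le> \<mu> i + t * \<nu> i \<and> \<mu> i + t * \<nu> i \<le> 1" if "i \<in> R" for i
  proof (cases "\<nu> i > 0")
    case True
    then have "t * \<nu> i \<le> 1 - \<mu> i" using t_le[OF that] by (simp add: step_def pos_le_divide_eq)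
    then show ?thesis using True \<open>0 \<le> t\<close> assms(3) that by auto
  next
    case False
    then have "\<nu> i < 0" using assms(3) that by force
    have "t \<le> \<mu> i / - \<nu> i" using t_le[OF that] False by (simp add: step_def)
    then have "- \<mu> i \<le> t * \<nu> i" using \<open>\<nu> i < 0\<close> by (subst (asm) pos_le_divide_eq) auto
    then show ?thesis using mult_nonneg_nonpos[of t "\<nu> i"] \<open>\<nu> i < 0\<close> \<open>0 \<le> t\<close> assms(3) that by auto
  qed
  moreover have "\<mu> i0 + t * \<nu> i0 \<in> {0, 1}"
    using i0 assms(3) by (cases "\<nu> i0 > 0") (auto simp: step_def)
  ultimately show ?thesis using i0(1) by blast
qed

lemma box_polytope_reduce_fractional:
  assumes "finite A" "\<mu> \<in> box_polytope A a r m" "m < card (fractional_entries A \<mu>)"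
  shows "\<exists>\<mu>'\<in>box_polytope A a r m. card (fractional_entries A \<mu>') < card (fractional_entries A \<mu>)"
proof -
  define F where "F = fractional_entries A \<mu>"
  have F: "finite F" "F \<subseteq> A" using assms(1) by (auto simp: F_def fractional_entries_def)
  obtain \<nu> where \<nu>: "\<exists>i\<in>F. \<nu> i \<noteq> 0" "\<forall>l<m. (\<Sum>i\<in>F. a l i * \<nu> i) = 0"
    using homogeneous_system_nontrivial_solution[OF F(1) assms(3)[folded F_def]] by blast
  define R where "R = {i\<in>F. \<nu> i \<noteq> 0}"
  have R: "finite R" "R \<noteq> {}" "R \<subseteq> A" using F \<nu>(1) by (auto simp: R_def)
  have "\<forall>i\<in>R. 0 < \<mu> i \<and> \<mu> i < 1 \<and> \<nu> i \<noteq> 0"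
    using assms(2) by (force simp: R_def F_def fractional_entries_def box_polytope_def)
  then obtain t i0 where t: "\<forall>i\<in>R. 0 \<le> \<mu> i + t * \<nu> i \<and> \<mu> i + t * \<nu> i \<le> 1"
    and i0: "i0 \<in> R" "\<mu> i0 + t * \<nu> i0 \<in> {0, 1}"
    using ratio_test[OF R(1,2)] by blast
  define \<mu>' where "\<mu>' i = \<mu> i + t * (if i \<in> R then \<nu> i else 0)" for i
  have "(\<Sum>i\<in>A. a l i * \<mu>' i) = r l" if "l < m" for l
  proof -
    have "(\<Sum>i\<in>A. a l i * (if i \<in> R then \<nu> i else 0)) = (\<Sum>i\<in>R. a l i * \<nu> i)"
      using R(3) assms(1) by (intro sum.mono_neutral_cong_right) auto
    also have "\<dots> = (\<Sum>i\<in>F. a l i * \<nu> i)"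
      using F(1) by (intro sum.mono_neutral_left) (auto simp: R_def)
    finally show ?thesis
      using \<nu>(2) assms(2) that
      by (simp add: \<mu>'_def box_polytope_def algebra_simps sum.distrib sum_distrib_left[symmetric])
  qed
  then have \<mu>'_mem: "\<mu>' \<in> box_polytope A a r m"
    using assms(2) t by (auto simp: box_polytope_def \<mu>'_def)
  have "fractional_entries A \<mu>' \<subseteq> F - {i0}"
    using i0 by (auto simp: fractional_entries_def \<mu>'_def F_def R_def)
  then have "card (fractional_entries A \<mu>') \<le> card (F - {i0})"
    using F(1) by (intro card_mono) auto
  also have "\<dots> < card F"
    using F(1) i0(1) by (intro card_Diff1_less) (auto simp: R_def)
  finally have "card (fractional_entries A \<mu>') < card F" .
  with \<mu>'_mem show ?thesis unfolding F_def by blast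
qed

lemma box_polytope_sparse_point:
  assumes "finite A" "\<mu> \<in> box_polytope A a r m"
  shows "\<exists>\<mu>'\<in>box_polytope A a r m. card (fractional_entries A \<mu>') \<le> m"
proof -
  obtain \<mu>' where \<mu>': "\<mu>' \<in> box_polytope A a r m"
    and least: "\<forall>\<rho>. \<rho> \<in> box_polytope A a r m \<longrightarrow> card (fractional_entries A \<mu>') \<le> card (fractional_entries A \<rho>)"
    using ex_has_least_nat[of "\<lambda>\<rho>. \<rho> \<in> box_polytope A a r m" \<mu> "\<lambda>\<rho>. card (fractional_entries A \<rho>)"] assms(2)
    by blast
  show ?thesis
    using box_polytope_reduce_fractional[OF assms(1) \<mu>'] least \<mu>' by (meson leD not_le_imp_less)
qed

section \<open>The Steinitz lemma\<close>

definition balancing_weights :: "nat \<Rightarrow> ('a \<Rightarrow> nat \<Rightarrow> real) \<Rightarrow> 'a set \<Rightarrow> ('a \<Rightarrow> real) \<Rightarrow> bool" where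
  "balancing_weights k v A \<mu> \<longleftrightarrow> (\<forall>i\<in>A. 0 \<le> \<mu> i \<and> \<mu> i \<le> 1) \<and> (\<forall>c<k. (\<Sum>i\<in>A. \<mu> i * v i c) = 0)
     \<and> (\<Sum>i\<in>A. \<mu> i) = real (card A) - real k"

lemma sum_gt_if_positive_and_few_fractional:
  fixes \<mu> :: "'a \<Rightarrow> real"
  assumes "finite A" "\<forall>i\<in>A. 0 < \<mu> i \<and> \<mu> i \<le> 1" "card (fractional_entries A \<mu>) \<le> Suc k"
  shows "real (card A) - real k - 1 < (\<Sum>i\<in>A. \<mu> i)"
proof -
  define F where "F = fractional_entries A \<mu>"
  have F: "finite F" "F \<subseteq> A" using assms(1) by (auto simp: F_def fractional_entries_def)
  have "(\<Sum>i\<in>A - F. \<mu> i) = (\<Sum>i\<in>A - F. 1)"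
    using assms(2) by (intro sum.cong) (auto simp: F_def fractional_entries_def)
  then have "(\<Sum>i\<in>A. \<mu> i) = real (card (A - F)) + (\<Sum>i\<in>F. \<mu> i)"
    using sum.subset_diff[OF F(2) assms(1), of \<mu>] by simp
  also have "real (card (A - F)) = real (card A) - real (card F)"
    using F card_Diff_subset[OF F(1,2)] card_mono[OF assms(1) F(2)] by simp
  finally have sum_A: "(\<Sum>i\<in>A. \<mu> i) = real (card A) - real (card F) + (\<Sum>i\<in>F. \<mu> i)" .
  show ?thesis
  proof (cases "F = {}")
    case True
    then show ?thesis using sum_A by simp
  next
    case False
    then have "0 < (\<Sum>i\<in>F. \<mu> i)" using F assms(2) by (intro sum_pos) auto
    then show ?thesis using sum_A assms(3) by (simp add: F_def)
  qed
qed

lemma balancing_weights_remove: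
  assumes "finite A" "k < card A" "balancing_weights k v A \<mu>"
  shows "\<exists>p\<in>A. \<exists>\<rho>. balancing_weights k v (A - {p}) \<rho>"
proof -
  define s where "s = real (card A) - real k - 1"
  define a where "a l i = (if l < k then v i l else 1)" for l i
  define r where "r l = (if l < k then 0 else s)" for l
  define \<theta> where "\<theta> = s / (s + 1)"
  have \<theta>: "0 \<le> \<theta>" "\<theta> \<le> 1" "\<theta> * (s + 1) = s"
    using assms(2) by (auto simp: \<theta>_def s_def)
  have "(\<Sum>i\<in>A. \<mu> i) = s + 1" using assms(3) by (simp add: balancing_weights_def s_def)
  moreover have "(\<Sum>i\<in>A. v i l * (\<theta> * \<mu> i)) = \<theta> * (\<Sum>i\<in>A. \<mu> i * v i l)" for l
    by (simp add: sum_distrib_left ac_simps)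
  ultimately have "(\<lambda>i. \<theta> * \<mu> i) \<in> box_polytope A a r (Suc k)"
    using assms(3) \<theta>
    by (auto simp: box_polytope_def balancing_weights_def a_def r_def less_Suc_eq
        mult_le_one sum_distrib_left[symmetric])
  then obtain \<rho> where \<rho>: "\<rho> \<in> box_polytope A a r (Suc k)"
    and sparse: "card (fractional_entries A \<rho>) \<le> Suc k"
    using box_polytope_sparse_point[OF assms(1)] by blast
  have box: "\<forall>i\<in>A. 0 \<le> \<rho> i \<and> \<rho> i \<le> 1"
    and bal: "\<forall>c<k. (\<Sum>i\<in>A. \<rho> i * v i c) = 0" and sum: "(\<Sum>i\<in>A. \<rho> i) = s"
    using \<rho> by (auto simp: box_polytope_def a_def r_def less_Suc_eq mult.commute)
  have "\<exists>p\<in>A. \<rho> p = 0"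
  proof (rule ccontr)
    assume "\<not> ?thesis"
    then have "\<forall>i\<in>A. 0 < \<rho> i \<and> \<rho> i \<le> 1" using box by force
    from sum_gt_if_positive_and_few_fractional[OF assms(1) this sparse] show False by (simp add: sum s_def)
  qed
  then obtain p where p: "p \<in> A" "\<rho> p = 0" by blast
  have "(\<Sum>i\<in>A. f i) = (\<Sum>i\<in>A - {p}. f i)" if "f p = 0" for f :: "'a \<Rightarrow> real"
    using sum.remove[OF assms(1) p(1), of f] that by simp
  then have "balancing_weights k v (A - {p}) \<rho>"
    using box bal sum p assms(1,2) by (simp add: balancing_weights_def s_def of_nat_diff)
  with p(1) show ?thesis by blast
qed

lemma balancing_weights_card_ge:
  assumes "balancing_weights k v A \<mu>"
  shows "k \<le> card A"
proof -
  have "0 \<le> (\<Sum>i\<in>A. \<mu> i)" using assms by (intro sum_nonneg) (simp add: balancing_weights_def)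
  then show ?thesis using assms by (simp add: balancing_weights_def)
qed

lemma balancing_ordering:
  assumes "finite A" "balancing_weights k v A \<mu>"
  shows "\<exists>xs. distinct xs \<and> set xs = A \<and> (\<forall>i\<ge>k. \<exists>\<rho>. balancing_weights k v (set (take i xs)) \<rho>)"
  using assms
proof (induction "card A" arbitrary: A \<mu> rule: less_induct)
  case less
  show ?case
  proof (cases "k < card A")
    case False
    then have "card A = k" using balancing_weights_card_ge[OF less.prems(2)] by simp
    obtain xs where xs: "distinct xs" "set xs = A" using finite_distinct_list[OF less.prems(1)] by blast
    have "take i xs = xs" if "k \<le> i" for i
      using that xs \<open>card A = k\<close> distinct_card[OF xs(1)] by simp
    then have "\<forall>i\<ge>k. balancing_weights k v (set (take i xs)) \<mu>" using xs less.prems(2) by simp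
    with xs show ?thesis by blast
  next
    case True
    then obtain p \<rho> where p: "p \<in> A" and \<rho>: "balancing_weights k v (A - {p}) \<rho>"
      using balancing_weights_remove[OF less.prems(1) True less.prems(2)] by blast
    have "card (A - {p}) < card A" using p less.prems(1) by (intro card_Diff1_less)
    then obtain ys where ys: "distinct ys" "set ys = A - {p}"
      and prefixes: "\<forall>i\<ge>k. \<exists>\<rho>. balancing_weights k v (set (take i ys)) \<rho>"
      using less.hyps[of "A - {p}" \<rho>] less.prems(1) \<rho> by auto
    have "\<exists>\<rho>. balancing_weights k v (set (take i (ys @ [p]))) \<rho>" if "k \<le> i" for i
    proof (cases "i \<le> length ys")
      case True
      then show ?thesis using prefixes that by simp
    next
      case False
      then have "set (take i (ys @ [p])) = A" using ys p by auto
      then show ?thesis using less.prems(2) by auto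
    qed
    moreover have "distinct (ys @ [p])" "set (ys @ [p]) = A" using ys p by auto
    ultimately show ?thesis by blast
  qed
qed

lemma balancing_weights_sum_bound:
  assumes "balancing_weights k v A \<mu>" "c < k" "\<forall>i\<in>A. \<bar>v i c\<bar> \<le> D"
  shows "\<bar>\<Sum>i\<in>A. v i c\<bar> \<le> real k * D"
proof -
  have box: "\<forall>i\<in>A. 0 \<le> \<mu> i \<and> \<mu> i \<le> 1" and bal: "(\<Sum>i\<in>A. \<mu> i * v i c) = 0"
    and sum: "(\<Sum>i\<in>A. \<mu> i) = real (card A) - real k"
    using assms(1,2) by (auto simp: balancing_weights_def)
  have "(\<Sum>i\<in>A. v i c) = (\<Sum>i\<in>A. v i c) - (\<Sum>i\<in>A. \<mu> i * v i c)" using bal by simp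
  also have "\<dots> = (\<Sum>i\<in>A. (1 - \<mu> i) * v i c)" by (simp add: sum_subtractf algebra_simps)
  finally have "\<bar>\<Sum>i\<in>A. v i c\<bar> \<le> (\<Sum>i\<in>A. \<bar>(1 - \<mu> i) * v i c\<bar>)" by (metis sum_abs)
  also have "\<dots> \<le> (\<Sum>i\<in>A. (1 - \<mu> i) * D)"
    using box assms(3) by (intro sum_mono) (auto simp: abs_mult intro: mult_left_mono)
  also have "\<dots> = real k * D"
    using sum by (simp add: sum_distrib_right[symmetric] sum_subtractf)
  finally show ?thesis .
qed

lemma balancing_weights_uniform:
  assumes "k \<le> card A" "\<forall>c<k. (\<Sum>i\<in>A. v i c) = 0"
  shows "balancing_weights k v A (\<lambda>_. 1 - real k / real (card A))"
proof -
  define \<theta> where "\<theta> = 1 - real k / real (card A)"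
  have "(\<Sum>i\<in>A. \<theta> * v i c) = 0" if "c < k" for c
    using assms(2) that by (simp add: sum_distrib_left[symmetric])
  moreover have "(\<Sum>i\<in>A. \<theta>) = real (card A) - real k"
    using assms(1) by (cases "card A = 0") (simp_all add: \<theta>_def algebra_simps)
  moreover have "0 \<le> \<theta>" "\<theta> \<le> 1"
    using assms(1) by (auto simp: \<theta>_def divide_le_eq_1)
  ultimately show ?thesis by (simp add: balancing_weights_def \<theta>_def)
qed

lemma steinitz_ordering:
  fixes v :: "'a \<Rightarrow> nat \<Rightarrow> real"
  assumes "finite A" "\<forall>c<k. (\<Sum>i\<in>A. v i c) = 0" "\<forall>i\<in>A. \<forall>c<k. \<bar>v i c\<bar> \<le> D" "0 \<le> D"
  shows "\<exists>xs. distinct xs \<and> set xs = A \<and> (\<forall>i c. c < k \<longrightarrow> \<bar>\<Sum>x\<in>set (take i xs). v x c\<bar> \<le> real k * D)"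
proof -
  obtain xs where xs: "distinct xs" "set xs = A" and long:
    "\<forall>i. k \<le> card (set (take i xs)) \<longrightarrow> (\<exists>\<rho>. balancing_weights k v (set (take i xs)) \<rho>)"
  proof (cases "k \<le> card A")
    case True
    from balancing_ordering[OF assms(1) balancing_weights_uniform[OF True assms(2)]]
    obtain xs where xs: "distinct xs" "set xs = A"
      and prefixes: "\<forall>i\<ge>k. \<exists>\<rho>. balancing_weights k v (set (take i xs)) \<rho>"
      by blast
    have "card (set (take i xs)) \<le> i" for i
      using card_length[of "take i xs"] by simp
    with prefixes have "\<forall>i. k \<le> card (set (take i xs)) \<longrightarrow> (\<exists>\<rho>. balancing_weights k v (set (take i xs)) \<rho>)"
      using order_trans by blast
    with xs show ?thesis by (rule that)
  next
    case False
    obtain xs where xs: "distinct xs" "set xs = A" using finite_distinct_list[OF assms(1)] by blast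
    have "card (set (take i xs)) \<le> card A" for i
      using assms(1) xs(2) by (intro card_mono) (auto dest: in_set_takeD)
    with False have "\<forall>i. \<not> k \<le> card (set (take i xs))" using order_trans by blast
    with xs show ?thesis using that by blast
  qed
  have "\<bar>\<Sum>x\<in>set (take i xs). v x c\<bar> \<le> real k * D" if "c < k" for i c
  proof (cases "k \<le> card (set (take i xs))")
    case True
    then obtain \<rho> where "balancing_weights k v (set (take i xs)) \<rho>" using long by blast
    moreover have "\<forall>x\<in>set (take i xs). \<bar>v x c\<bar> \<le> D"
      using assms(3) xs(2) that by (auto dest: in_set_takeD)
    ultimately show ?thesis using balancing_weights_sum_bound that by blast
  next
    case False
    have "\<bar>\<Sum>x\<in>set (take i xs). v x c\<bar> \<le> (\<Sum>x\<in>set (take i xs). D)"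
      using assms(3) xs(2) that by (intro order_trans[OF sum_abs] sum_mono) (auto dest: in_set_takeD)
    also have "\<dots> \<le> real k * D"
      using False assms(4) by (auto intro: mult_right_mono)
    finally show ?thesis .
  qed
  with xs show ?thesis by blast
qed

section \<open>Zero-sum subsets by pigeonhole\<close>

lemma pigeonhole_equal_values:
  assumes "f ` {0..N} \<subseteq> S" "finite S" "card S < N + 1"
  shows "\<exists>a b. a < b \<and> b \<le> N \<and> f a = f b"
proof -
  have "card (f ` {0..N}) < card {0..N}"
    using card_mono[OF assms(2,1)] assms(3) by simp
  then have "\<not> inj_on f {0..N}" by (rule pigeonhole)
  then show ?thesis unfolding inj_on_def by (metis atLeastAtMost_iff linorder_neqE_nat)
qed

lemma set_take_psubset_set_take:
  assumes "distinct xs" "a < b" "b \<le> length xs"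
  shows "set (take a xs) \<subset> set (take b xs)"
proof -
  have "card (set (take a xs)) < card (set (take b xs))"
    using assms by (simp add: distinct_card)
  then show ?thesis
    using set_take_subset_set_take[of a b xs] assms(2) by (auto simp: psubset_eq)
qed

lemma zero_sum_subset_avoiding:
  fixes V :: "'a \<Rightarrow> nat \<Rightarrow> int"
  assumes "finite I" "E \<subseteq> I" "\<forall>c<k. (\<Sum>i\<in>I. V i c) = 0" "\<forall>i\<in>I. \<forall>c<k. \<bar>V i c\<bar> \<le> D" "0 \<le> D"
    and "(card E + 1) * nat (2 * int k * D + 1) ^ k < card I + 1"
  shows "\<exists>T \<subseteq> I - E. T \<noteq> {} \<and> (\<forall>c<k. (\<Sum>i\<in>T. V i c) = 0)"
proof -
  have "\<forall>c<k. (\<Sum>i\<in>I. real_of_int (V i c)) = 0" "\<forall>i\<in>I. \<forall>c<k. \<bar>real_of_int (V i c)\<bar> \<le> real_of_int D"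
    using assms(3,4) by (simp_all flip: of_int_sum of_int_abs)
  from steinitz_ordering[OF assms(1) this of_int_nonneg[OF assms(5)]]
  obtain xs where xs: "distinct xs" "set xs = I" and bounded:
    "\<forall>i c. c < k \<longrightarrow> \<bar>\<Sum>x\<in>set (take i xs). real_of_int (V x c)\<bar> \<le> real k * real_of_int D"
    by blast
  define P where "P i = set (take i xs)" for i
  define M where "M = int k * D"
  define L where "L = {ys. set ys \<subseteq> {-M..M} \<and> length ys = k}"
  define f where "f i = (card (P i \<inter> E), map (\<lambda>c. \<Sum>x\<in>P i. V x c) [0..<k])" for i
  have "f i \<in> {0..card E} \<times> L" for i
  proof -
    have "card (P i \<inter> E) \<le> card E" using assms(1,2) finite_subset by (intro card_mono) auto
    moreover have "- M \<le> (\<Sum>x\<in>P i. V x c) \<and> (\<Sum>x\<in>P i. V x c) \<le> M" if "c < k" for c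
    proof -
      have "real_of_int \<bar>\<Sum>x\<in>P i. V x c\<bar> \<le> real_of_int M"
        using bounded that by (simp add: P_def M_def)
      then show ?thesis by linarith
    qed
    ultimately show ?thesis by (auto simp: f_def L_def)
  qed
  then have "f ` {0..card I} \<subseteq> {0..card E} \<times> L" by blast
  moreover have "card L = nat (2 * int k * D + 1) ^ k"
    unfolding L_def card_lists_length_eq[OF finite_atLeastAtMost_int] by (simp add: M_def mult.commute mult.left_commute)
  then have "card ({0..card E} \<times> L) < card I + 1"
    using assms(6) by (simp add: card_cartesian_product)
  moreover have "finite ({0..card E} \<times> L)" by (simp add: L_def finite_lists_length_eq)
  ultimately obtain a b where ab: "a < b" "b \<le> card I" "f a = f b"
    using pigeonhole_equal_values by blast
  have P_psub: "P a \<subset> P b"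
    using set_take_psubset_set_take[OF xs(1) ab(1)] ab(2) xs distinct_card by (fastforce simp: P_def)
  have fin_P: "finite (P b)" by (simp add: P_def)
  define T where "T = P b - P a"
  have "T \<noteq> {}" using P_psub by (auto simp: T_def)
  moreover have "T \<subseteq> I - E"
  proof -
    have "card (P a \<inter> E) = card (P b \<inter> E)" using ab(3) by (simp add: f_def)
    then have "P a \<inter> E = P b \<inter> E" using fin_P P_psub by (intro card_subset_eq) auto
    moreover have "P b \<subseteq> I" using xs(2) by (auto simp: P_def dest: in_set_takeD)
    ultimately show ?thesis by (auto simp: T_def)
  qed
  moreover have "(\<Sum>i\<in>T. V i c) = 0" if "c < k" for c
  proof -
    have "(\<Sum>x\<in>P a. V x c) = (\<Sum>x\<in>P b. V x c)" using ab(3) that by (simp add: f_def)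
    then show ?thesis using sum.subset_diff[OF psubset_imp_subset[OF P_psub] fin_P, of "\<lambda>x. V x c"] by (simp add: T_def)
  qed
  ultimately show ?thesis by blast
qed

lemma int_vector_split:
  fixes s :: "nat \<Rightarrow> int"
  assumes "\<forall>c<k. \<bar>s c\<bar> \<le> int t * D" "0 \<le> D"
  shows "\<exists>w. (\<forall>l<t. \<forall>c<k. \<bar>w l c\<bar> \<le> D) \<and> (\<forall>c<k. (\<Sum>l<t. w l c) = s c)"
  using assms(1)
proof (induction t arbitrary: s)
  case 0
  then show ?case by simp
next
  case (Suc t)
  define y where "y c = max (- D) (min D (s c))" for c
  have "\<forall>c<k. \<bar>s c - y c\<bar> \<le> int t * D"
    using Suc.prems assms(2) by (auto simp: y_def abs_le_iff algebra_simps max_def min_def)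
  then obtain w where w: "\<forall>l<t. \<forall>c<k. \<bar>w l c\<bar> \<le> D" "\<forall>c<k. (\<Sum>l<t. w l c) = s c - y c"
    using Suc.IH[of "\<lambda>c. s c - y c"] by blast
  have "\<forall>l<Suc t. \<forall>c<k. \<bar>(w(t := y)) l c\<bar> \<le> D"
    using w(1) assms(2) by (auto simp: y_def less_Suc_eq)
  moreover have "\<forall>c<k. (\<Sum>l<Suc t. (w(t := y)) l c) = s c"
    using w(2) by simp
  ultimately show ?case by blast
qed

lemma zero_subsum_of_small_sum:
  fixes u :: "'a \<Rightarrow> nat \<Rightarrow> int"
  assumes "finite S" "\<forall>j\<in>S. \<forall>c<k. \<bar>u j c\<bar> \<le> D" "\<forall>c<k. \<bar>\<Sum>j\<in>S. u j c\<bar> \<le> int t * D" "0 \<le> D"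
    and "(t + 1) * nat (2 * int k * D + 1) ^ k < card S + t + 1"
  shows "\<exists>T \<subseteq> S. T \<noteq> {} \<and> (\<forall>c<k. (\<Sum>j\<in>T. u j c) = 0)"
proof -
  obtain w where w: "\<forall>l<t. \<forall>c<k. \<bar>w l c\<bar> \<le> D" "\<forall>c<k. (\<Sum>l<t. w l c) = - (\<Sum>j\<in>S. u j c)"
    using int_vector_split[of k "\<lambda>c. - (\<Sum>j\<in>S. u j c)" t D] assms(3,4) by auto
  define I where "I = Inl ` S \<union> Inr ` {..<t}"
  define E :: "('a + nat) set" where "E = Inr ` {..<t}"
  define V where "V = case_sum u w"
  have disj: "Inl ` S \<inter> E = {}" by (auto simp: E_def)
  have sum_I: "(\<Sum>i\<in>I. V i c) = (\<Sum>j\<in>S. u j c) + (\<Sum>l<t. w l c)" for c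
    using assms(1) disj
    by (simp add: I_def E_def V_def sum.union_disjoint sum.reindex)
  have card_I: "card I = card S + t"
    using assms(1) disj by (simp add: I_def E_def card_Un_disjoint card_image)
  have "\<exists>T' \<subseteq> I - E. T' \<noteq> {} \<and> (\<forall>c<k. (\<Sum>i\<in>T'. V i c) = 0)"
  proof (rule zero_sum_subset_avoiding)
    show "finite I" "E \<subseteq> I" using assms(1) by (auto simp: I_def E_def)
    show "\<forall>c<k. (\<Sum>i\<in>I. V i c) = 0" using sum_I w(2) by simp
    show "\<forall>i\<in>I. \<forall>c<k. \<bar>V i c\<bar> \<le> D" using assms(2) w(1) by (auto simp: I_def V_def)
    show "(card E + 1) * nat (2 * int k * D + 1) ^ k < card I + 1"
      using assms(5) card_I by (simp add: E_def card_image)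
  qed (fact assms(4))
  then obtain T' where T': "T' \<subseteq> I - E" "T' \<noteq> {}" "\<forall>c<k. (\<Sum>i\<in>T'. V i c) = 0" by blast
  define T where "T = Inl -` T'"
  have T'_eq: "T' = Inl ` T" using T'(1) by (auto simp: T_def I_def E_def)
  have "T \<subseteq> S" using T'(1) by (auto simp: T_def I_def E_def)
  moreover have "T \<noteq> {}" using T'(2) T'_eq by blast
  moreover have "(\<Sum>j\<in>T. u j c) = 0" if "c < k" for c
  proof -
    have "(\<Sum>j\<in>T. u j c) = (\<Sum>i\<in>T'. V i c)" by (simp add: T'_eq V_def sum.reindex)
    then show ?thesis using T'(3) that by simp
  qed
  ultimately show ?thesis by blast
qed

section \<open>Proximity of binary solutions\<close>

definition binary_solution :: "nat \<Rightarrow> nat \<Rightarrow> (nat \<Rightarrow> nat \<Rightarrow> int) \<Rightarrow> (nat \<Rightarrow> int) \<Rightarrow> (nat \<Rightarrow> int) \<Rightarrow> bool" where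
  "binary_solution k n H b z \<longleftrightarrow> (\<forall>j<n. z j \<in> {0, 1}) \<and> (\<forall>i<k. mat_vec_int n H z i = b i)"

definition round_with :: "(nat \<Rightarrow> real) \<Rightarrow> (nat \<Rightarrow> int) \<Rightarrow> nat \<Rightarrow> int" where
  "round_with x z j = (if x j = 0 then 0 else if x j = 1 then 1 else z j)"

definition mismatch :: "nat \<Rightarrow> (nat \<Rightarrow> real) \<Rightarrow> (nat \<Rightarrow> int) \<Rightarrow> nat set" where
  "mismatch n x z = {j. j < n \<and> round_with x z j \<noteq> z j}"

lemma finite_mismatch: "finite (mismatch n x z)"
  by (simp add: mismatch_def)

lemma mismatch_update:
  assumes "T \<subseteq> mismatch n x z"
  shows "mismatch n x (\<lambda>j. if j \<in> T then round_with x z j else z j) = mismatch n x z - T"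
  using assms by (auto simp: mismatch_def round_with_def)

lemma binary_solution_update:
  assumes "binary_solution k n H b z" "T \<subseteq> mismatch n x z"
    and "\<forall>c<k. (\<Sum>j\<in>T. (round_with x z j - z j) * H c j) = 0"
  shows "binary_solution k n H b (\<lambda>j. if j \<in> T then round_with x z j else z j)"
proof -
  have "mat_vec_int n H (\<lambda>j. if j \<in> T then round_with x z j else z j) c = b c" if "c < k" for c
  proof -
    have "(\<Sum>j<n. H c j * (if j \<in> T then round_with x z j else z j))
        = (\<Sum>j<n. H c j * z j) + (\<Sum>j<n. if j \<in> T then (round_with x z j - z j) * H c j else 0)"
      by (simp add: sum.distrib[symmetric] algebra_simps if_distrib cong: if_cong)
    also have "(\<Sum>j<n. if j \<in> T then (round_with x z j - z j) * H c j else 0)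
        = (\<Sum>j\<in>T. (round_with x z j - z j) * H c j)"
      using assms(2) by (intro sum.mono_neutral_cong_right) (auto simp: mismatch_def)
    finally show ?thesis using assms that by (simp add: binary_solution_def mat_vec_int_def)
  qed
  then show ?thesis using assms(1) by (auto simp: binary_solution_def round_with_def)
qed

lemma minimal_mismatch_no_zero_subsum:
  assumes "binary_solution k n H b z"
    and "\<forall>y. binary_solution k n H b y \<longrightarrow> card (mismatch n x z) \<le> card (mismatch n x y)"
    and "T \<subseteq> mismatch n x z" "T \<noteq> {}"
  shows "\<exists>c<k. (\<Sum>j\<in>T. (round_with x z j - z j) * H c j) \<noteq> 0"
proof (rule ccontr)
  assume "\<not> ?thesis"
  then have "binary_solution k n H b (\<lambda>j. if j \<in> T then round_with x z j else z j)"
    using binary_solution_update[OF assms(1,3)] by auto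
  then have "card (mismatch n x z) \<le> card (mismatch n x z - T)"
    using assms(2) mismatch_update[OF assms(3)] by metis
  moreover have "mismatch n x z - T \<subset> mismatch n x z" using assms(3,4) by blast
  then have "card (mismatch n x z - T) < card (mismatch n x z)"
    by (rule psubset_card_mono[OF finite_mismatch])
  ultimately show False by simp
qed

lemma finite_mat_entries:
  fixes H :: "nat \<Rightarrow> nat \<Rightarrow> int"
  shows "finite {\<bar>H i j\<bar> | i j. i < k \<and> j < n}"
  by (rule finite_image_set2) simp_all

lemma mat_max_norm_nonneg: "0 \<le> mat_max_norm k n H"
  unfolding mat_max_norm_def by (intro Max_ge) (simp_all add: finite_mat_entries)

lemma abs_le_mat_max_norm: "i < k \<Longrightarrow> j < n \<Longrightarrow> \<bar>H i j\<bar> \<le> mat_max_norm k n H"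
  unfolding mat_max_norm_def by (intro Max_ge) (auto simp: finite_mat_entries)

lemma finite_vec_entries:
  fixes v :: "nat \<Rightarrow> real"
  shows "finite {\<bar>v i\<bar> | i. i < m}"
  by (rule finite_image_set) simp

lemma vec_inf_norm_nonneg: "0 \<le> vec_inf_norm m v"
  unfolding vec_inf_norm_def by (intro Max_ge) (simp_all add: finite_vec_entries)

lemma abs_le_vec_inf_norm: "i < m \<Longrightarrow> \<bar>v i\<bar> \<le> vec_inf_norm m v"
  unfolding vec_inf_norm_def by (intro Max_ge) (auto simp: finite_vec_entries)

lemma abs_mat_vec_real_le:
  fixes H :: "nat \<Rightarrow> nat \<Rightarrow> int"
  assumes "i < k"
  shows "\<bar>mat_vec_real n H d i\<bar> \<le> of_int (mat_max_norm k n H) * vec_one_norm n d"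
proof -
  have "\<bar>mat_vec_real n H d i\<bar> \<le> (\<Sum>j<n. \<bar>of_int (H i j) * d j\<bar>)"
    unfolding mat_vec_real_def by (rule sum_abs)
  also have "\<dots> \<le> (\<Sum>j<n. of_int (mat_max_norm k n H) * \<bar>d j\<bar>)"
  proof (intro sum_mono)
    fix j assume "j \<in> {..<n}"
    then have "\<bar>H i j\<bar> \<le> mat_max_norm k n H" using abs_le_mat_max_norm[OF assms] by simp
    then have "\<bar>of_int (H i j)\<bar> \<le> (of_int (mat_max_norm k n H) :: real)"
      by (simp flip: of_int_abs)
    then show "\<bar>of_int (H i j) * d j\<bar> \<le> of_int (mat_max_norm k n H) * \<bar>d j\<bar>"
      by (simp add: abs_mult mult_right_mono)
  qed
  also have "\<dots> = of_int (mat_max_norm k n H) * vec_one_norm n d"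
    by (simp add: vec_one_norm_def sum_distrib_left)
  finally show ?thesis .
qed

lemma vec_one_norm_round_with_le:
  assumes "\<forall>j<n. 0 \<le> x j \<and> x j \<le> 1" "\<forall>j<n. z j \<in> {0, 1}"
  shows "vec_one_norm n (\<lambda>j. of_int (round_with x z j) - x j) \<le> card {j. j < n \<and> x j \<notin> {0, 1}}"
proof -
  have "vec_one_norm n (\<lambda>j. of_int (round_with x z j) - x j) \<le> (\<Sum>j<n. of_bool (x j \<notin> {0, 1}))"
    unfolding vec_one_norm_def using assms by (intro sum_mono) (auto simp: round_with_def)
  also have "\<dots> = card {j. j < n \<and> x j \<notin> {0, 1}}"
    by (simp add: Int_def)
  finally show ?thesis .
qed

lemma vec_one_norm_le_mismatch:
  assumes "\<forall>j<n. 0 \<le> x j \<and> x j \<le> 1" "\<forall>j<n. z j \<in> {0, 1}"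
  shows "vec_one_norm n (\<lambda>j. x j - of_int (z j))
           \<le> card (mismatch n x z) + card {j. j < n \<and> x j \<notin> {0, 1}}"
proof -
  have "vec_one_norm n (\<lambda>j. x j - of_int (z j))
          \<le> (\<Sum>j<n. of_bool (j \<in> mismatch n x z) + of_bool (x j \<notin> {0, 1}))"
    unfolding vec_one_norm_def using assms
    by (intro sum_mono) (auto simp: mismatch_def round_with_def)
  also have "\<dots> = card (mismatch n x z) + card {j. j < n \<and> x j \<notin> {0, 1}}"
    by (simp add: sum.distrib Int_def mismatch_def conj_commute)
  finally show ?thesis .
qed

lemma mismatch_sum_eq:
  assumes "binary_solution k n H b z" "c < k"
  shows "of_int (\<Sum>j\<in>mismatch n x z. (round_with x z j - z j) * H c j)
           = mat_vec_real n H (\<lambda>j. of_int (round_with x z j) - x j) c + (mat_vec_real n H x c - of_int (b c))"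
proof -
  have "(\<Sum>j\<in>mismatch n x z. (round_with x z j - z j) * H c j) = (\<Sum>j<n. (round_with x z j - z j) * H c j)"
    by (intro sum.mono_neutral_left) (auto simp: mismatch_def)
  also have "real_of_int \<dots> = (\<Sum>j<n. of_int (H c j) * (of_int (round_with x z j) - x j))
      + ((\<Sum>j<n. of_int (H c j) * x j) - (\<Sum>j<n. of_int (H c j) * of_int (z j)))"
    by (simp add: sum_subtractf[symmetric] sum.distrib[symmetric] algebra_simps)
  also have "(\<Sum>j<n. of_int (H c j) * of_int (z j)) = real_of_int (b c)"
    using assms by (simp add: binary_solution_def mat_vec_int_def flip: of_int_mult of_int_sum)
  finally show ?thesis by (simp add: mat_vec_real_def)
qed

lemma mismatch_sum_bound:
  fixes k n :: nat and H :: "nat \<Rightarrow> nat \<Rightarrow> int" and b :: "nat \<Rightarrow> int" and bstar :: "nat \<Rightarrow> real"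
  defines "\<Delta> \<equiv> mat_max_norm k n H" and "\<beta> \<equiv> vec_inf_norm k (\<lambda>i. bstar i - of_int (b i))"
  assumes z: "binary_solution k n H b z" and c: "c < k" and x_box: "\<forall>j<n. 0 \<le> x j \<and> x j \<le> 1"
    and x_frac: "card {j. j < n \<and> x j \<notin> {0, 1}} \<le> \<phi>" and x_eq: "\<forall>i<k. mat_vec_real n H x i = bstar i"
  shows "\<bar>\<Sum>j\<in>mismatch n x z. (round_with x z j - z j) * H c j\<bar> \<le> int (nat \<lceil>\<beta> / of_int \<Delta>\<rceil> + \<phi>) * \<Delta>"
proof (cases "\<Delta> = 0")
  case True
  then have "H c j = 0" if "j < n" for j using abs_le_mat_max_norm[OF c that, of H] \<Delta>_def by simp
  then show ?thesis using True by (simp add: mismatch_def)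
next
  case False
  then have "0 < \<Delta>" using mat_max_norm_nonneg \<Delta>_def by (metis order_le_less)
  define s where "s = (\<Sum>j\<in>mismatch n x z. (round_with x z j - z j) * H c j)"
  have "real_of_int s = mat_vec_real n H (\<lambda>j. of_int (round_with x z j) - x j) c + (bstar c - of_int (b c))"
    using mismatch_sum_eq[OF z c] x_eq c unfolding s_def by presburger
  then have "real_of_int \<bar>s\<bar>
      \<le> \<bar>mat_vec_real n H (\<lambda>j. of_int (round_with x z j) - x j) c\<bar> + \<bar>bstar c - of_int (b c)\<bar>"
    by (simp only: of_int_abs abs_triangle_ineq)
  also have "\<dots> \<le> of_int \<Delta> * vec_one_norm n (\<lambda>j. of_int (round_with x z j) - x j) + \<beta>"
    unfolding \<Delta>_def \<beta>_def by (intro add_mono abs_mat_vec_real_le[OF c] abs_le_vec_inf_norm[OF c])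
  also have "\<dots> \<le> real_of_int \<Delta> * real \<phi> + real_of_int \<lceil>\<beta> / real_of_int \<Delta>\<rceil> * real_of_int \<Delta>"
  proof (intro add_mono mult_left_mono)
    show "vec_one_norm n (\<lambda>j. of_int (round_with x z j) - x j) \<le> real \<phi>"
      using vec_one_norm_round_with_le[OF x_box, of z] z x_frac by (simp add: binary_solution_def)
    show "\<beta> \<le> real_of_int \<lceil>\<beta> / real_of_int \<Delta>\<rceil> * real_of_int \<Delta>"
      using \<open>0 < \<Delta>\<close> by (simp add: pos_divide_le_eq[symmetric])
  qed (use \<open>0 < \<Delta>\<close> in simp)
  also have "\<dots> = real_of_int (int (nat \<lceil>\<beta> / real_of_int \<Delta>\<rceil> + \<phi>) * \<Delta>)"
  proof -
    have "0 \<le> \<beta> / real_of_int \<Delta>" using vec_inf_norm_nonneg \<open>0 < \<Delta>\<close> by (simp add: \<beta>_def)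
    then show ?thesis by (simp add: algebra_simps)
  qed
  finally show ?thesis unfolding s_def by linarith
qed

lemma minimal_mismatch_card_bound:
  fixes k n :: nat and H :: "nat \<Rightarrow> nat \<Rightarrow> int"
  defines "\<Delta> \<equiv> mat_max_norm k n H"
  assumes z: "binary_solution k n H b z"
    and minimal: "\<forall>y. binary_solution k n H b y \<longrightarrow> card (mismatch n x z) \<le> card (mismatch n x y)"
    and small: "\<forall>c<k. \<bar>\<Sum>j\<in>mismatch n x z. (round_with x z j - z j) * H c j\<bar> \<le> int t * \<Delta>"
  shows "card (mismatch n x z) + t + 1 \<le> (t + 1) * nat (2 * int k * \<Delta> + 1) ^ k"
proof (rule ccontr)
  assume "\<not> ?thesis"
  then have big: "(t + 1) * nat (2 * int k * \<Delta> + 1) ^ k < card (mismatch n x z) + t + 1" by simp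
  have entries: "\<forall>j\<in>mismatch n x z. \<forall>c<k. \<bar>(round_with x z j - z j) * H c j\<bar> \<le> \<Delta>"
  proof (intro ballI allI impI)
    fix j c assume "j \<in> mismatch n x z" "c < k"
    then have "\<bar>round_with x z j - z j\<bar> \<le> 1" "\<bar>H c j\<bar> \<le> \<Delta>"
      using z abs_le_mat_max_norm[of c k j n H]
      by (auto simp: mismatch_def round_with_def binary_solution_def \<Delta>_def)
    then show "\<bar>(round_with x z j - z j) * H c j\<bar> \<le> \<Delta>"
      using mult_mono[of "\<bar>round_with x z j - z j\<bar>" 1 "\<bar>H c j\<bar>" \<Delta>] by (simp add: abs_mult)
  qed
  have "0 \<le> \<Delta>" by (simp add: \<Delta>_def mat_max_norm_nonneg)
  from zero_subsum_of_small_sum[OF finite_mismatch entries small this big]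
  obtain T where "T \<subseteq> mismatch n x z" "T \<noteq> {}" "\<forall>c<k. (\<Sum>j\<in>T. (round_with x z j - z j) * H c j) = 0"
    by blast
  then show False using minimal_mismatch_no_zero_subsum[OF z minimal] by blast
qed

theorem mainTheorem2:
  fixes k n :: nat and H :: "nat \<Rightarrow> nat \<Rightarrow> int"
    and bstar :: "nat \<Rightarrow> real" and b :: "nat \<Rightarrow> int"
    and xstar :: "nat \<Rightarrow> real" and \<phi> :: nat
  assumes xstar_box: "\<forall>j<n. 0 \<le> xstar j \<and> xstar j \<le> 1"
    and xstar_eq: "\<forall>i<k. mat_vec_real n H xstar i = bstar i"
    and xstar_frac: "card {j. j < n \<and> xstar j \<notin> {0, 1}} \<le> \<phi>"
    and feasible: "\<exists>z :: nat \<Rightarrow> int. (\<forall>j<n. z j \<in> {0, 1}) \<and> (\<forall>i<k. mat_vec_int n H z i = b i)"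
  shows "\<exists>zhat :: nat \<Rightarrow> int. (\<forall>j<n. zhat j \<in> {0, 1}) \<and> (\<forall>i<k. mat_vec_int n H zhat i = b i) \<and>
    vec_one_norm n (\<lambda>j. xstar j - of_int (zhat j))
      \<le> (of_int \<lceil>vec_inf_norm k (\<lambda>i. bstar i - of_int (b i)) / of_int (mat_max_norm k n H)\<rceil>
          + of_nat \<phi> + 1) * (2 * of_nat k * of_int (mat_max_norm k n H) + 1) ^ k"
proof -
  define \<Delta> where "\<Delta> = mat_max_norm k n H"
  define \<gamma> where "\<gamma> = \<lceil>vec_inf_norm k (\<lambda>i. bstar i - of_int (b i)) / real_of_int \<Delta>\<rceil>"
  define t where "t = nat \<gamma> + \<phi>"
  have "0 \<le> \<Delta>" by (simp add: \<Delta>_def mat_max_norm_nonneg)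
  then have "0 \<le> vec_inf_norm k (\<lambda>i. bstar i - of_int (b i)) / real_of_int \<Delta>"
    by (simp add: vec_inf_norm_nonneg)
  then have "0 \<le> \<gamma>" unfolding \<gamma>_def by simp
  from feasible obtain z0 where "binary_solution k n H b z0"
    unfolding binary_solution_def by blast
  from ex_has_least_nat[of "binary_solution k n H b", OF this, of "\<lambda>y. card (mismatch n xstar y)"]
  obtain z where z: "binary_solution k n H b z"
    and minimal: "\<forall>y. binary_solution k n H b y \<longrightarrow> card (mismatch n xstar z) \<le> card (mismatch n xstar y)"
    by blast
  have "\<forall>c<k. \<bar>\<Sum>j\<in>mismatch n xstar z. (round_with xstar z j - z j) * H c j\<bar> \<le> int t * \<Delta>"
    using mismatch_sum_bound[OF z _ xstar_box xstar_frac xstar_eq] unfolding t_def \<gamma>_def \<Delta>_def by blast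
  from minimal_mismatch_card_bound[OF z minimal this[unfolded \<Delta>_def]]
  have "card (mismatch n xstar z) + \<phi> \<le> (t + 1) * nat (2 * int k * \<Delta> + 1) ^ k"
    unfolding t_def \<Delta>_def by linarith
  then have "vec_one_norm n (\<lambda>j. xstar j - of_int (z j)) \<le> real ((t + 1) * nat (2 * int k * \<Delta> + 1) ^ k)"
    using vec_one_norm_le_mismatch[OF xstar_box, of z] z xstar_frac
    unfolding binary_solution_def by (meson of_nat_le_iff of_nat_add add_left_mono order_trans)
  also have "\<dots> = (of_int \<gamma> + of_nat \<phi> + 1) * (2 * of_nat k * of_int \<Delta> + 1) ^ k"
    using \<open>0 \<le> \<gamma>\<close> \<open>0 \<le> \<Delta>\<close> by (simp add: t_def of_nat_power algebra_simps)
  finally show ?thesis using z unfolding binary_solution_def \<gamma>_def \<Delta>_def by blast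
qed

end
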